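(* Let $(A_n)_{n\ge1}$ be a sequence of matrices with strictly positive entries, possibly of varying dimensions, such that all products $P_n:=A_nA_{n-1}\cdots A_1$ are defined. Let $\alpha\ge1$ and assume $R(A_n)\le\alpha$ for all $n\ge1$. Set $\kappa:=\frac{\sqrt{\alpha}-1}{\sqrt{\alpha}+1}$. Then for every $n\ge1$, \[ R(P_n)\le 1+\frac{4\kappa^n}{(1-\kappa^n)^2}, \] and in particular $R(P_n)\to1$ at least exponentially fast as $n\to\infty$.
   Context: For a matrix $B=(b_{ik})$ of size $d_1\times d_2$ with strictly positive entries, its distortion is $R(B)=\max_{1\le i,j\le d_1,\ 1\le k,\ell\le d_2}\frac{b_{ik}b_{j\ell}}{b_{i\ell}b_{jk}}$. *)

theory Defs
  imports Complex_Main "Jordan_Normal_Form.Matrix"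
begin

text \<open>A matrix with strictly positive entries (nonemptiness is assumed separately).\<close>
definition pos_mat :: "real mat \<Rightarrow> bool" where
  "pos_mat B \<longleftrightarrow> (\<forall>i<dim_row B. \<forall>k<dim_col B. B $$ (i,k) > 0)"

definition distortion :: "real mat \<Rightarrow> real" where
  "distortion B = Max {B $$ (i,k) * B $$ (j,l) / (B $$ (i,l) * B $$ (j,k)) | i j k l.
       i < dim_row B \<and> j < dim_row B \<and> k < dim_col B \<and> l < dim_col B}"

fun prod_seq :: "(nat \<Rightarrow> real mat) \<Rightarrow> nat \<Rightarrow> real mat" where
  "prod_seq A 0 = 1\<^sub>m (dim_col (A 1))"
| "prod_seq A (Suc n) = A (Suc n) * prod_seq A n"

end

theory Submission
  imports Defs
begin

text \<open>
  The key estimate concerns a single product: \<open>R X \<le> \<sigma>\<^sup>2\<close> and \<open>R Y \<le> \<tau>\<^sup>2\<close> imply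
  \<open>R (X Y) \<le> ((\<sigma> \<tau> + 1) / (\<sigma> + \<tau>))\<^sup>2\<close>. For fixed rows \<open>i, j\<close> and columns \<open>k, l\<close>, the cross
  ratio of \<open>X Y\<close> equals \<open>\<Sum>w \<Sum>w u v / (\<Sum>w u \<Sum>w v)\<close> with \<open>w\<^sub>m = X\<^sub>j\<^sub>m Y\<^sub>m\<^sub>l\<close>,
  \<open>u\<^sub>m = X\<^sub>i\<^sub>m / X\<^sub>j\<^sub>m\<close> and \<open>v\<^sub>m = Y\<^sub>m\<^sub>k / Y\<^sub>m\<^sub>l\<close>, and the spreads (max over min) of \<open>u\<close> and \<open>v\<close>
  are at most \<open>\<sigma>\<^sup>2\<close> and \<open>\<tau>\<^sup>2\<close>. The pointwise inequalities \<open>(u - min u) (v - max v) \<le> 0\<close> and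
  \<open>(u - max u) (v - min v) \<le> 0\<close> bound \<open>\<Sum>w u v\<close> linearly in \<open>\<Sum>w u\<close> and \<open>\<Sum>w v\<close>, and an
  elementary two-variable optimisation finishes.
  Since \<open>(cayley x cayley y + 1) / (cayley x + cayley y) = cayley (x y)\<close> and \<open>cayley \<kappa> = \<surd>\<alpha>\<close>,
  induction gives \<open>R (P\<^sub>n) \<le> cayley (\<kappa>\<^sup>n)\<^sup>2 = 1 + 4 \<kappa>\<^sup>n / (1 - \<kappa>\<^sup>n)\<^sup>2\<close>.
\<close>

lemma distortion_eq_Max_image:
  "distortion B = Max ((\<lambda>(i,j,k,l). B $$ (i,k) * B $$ (j,l) / (B $$ (i,l) * B $$ (j,k))) `
     ({..<dim_row B} \<times> {..<dim_row B} \<times> {..<dim_col B} \<times> {..<dim_col B}))"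
  unfolding distortion_def by (rule arg_cong[where f = Max]) (auto simp: image_iff, blast)

lemma cross_ratio_le_distortion:
  assumes "i < dim_row B" "j < dim_row B" "k < dim_col B" "l < dim_col B"
  shows "B $$ (i,k) * B $$ (j,l) / (B $$ (i,l) * B $$ (j,k)) \<le> distortion B"
  unfolding distortion_eq_Max_image
  using assms by (intro Max_ge) (auto intro!: image_eqI[where x = "(i,j,k,l)"])

lemma distortion_leI:
  assumes "dim_row B > 0" "dim_col B > 0"
    and "\<And>i j k l. i < dim_row B \<Longrightarrow> j < dim_row B \<Longrightarrow> k < dim_col B \<Longrightarrow> l < dim_col B
           \<Longrightarrow> B $$ (i,k) * B $$ (j,l) / (B $$ (i,l) * B $$ (j,k)) \<le> c"
  shows "distortion B \<le> c"
  unfolding distortion_eq_Max_image using assms by (intro Max.boundedI) auto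

lemma one_le_distortion:
  assumes "dim_row B > 0" "dim_col B > 0" "pos_mat B"
  shows "1 \<le> distortion B"
proof -
  have "B $$ (0,0) > 0" using assms by (simp add: pos_mat_def)
  then show ?thesis using cross_ratio_le_distortion[of 0 B 0 0 0] assms by simp
qed

lemma row_ratio_le_distortion:
  assumes "pos_mat X" "i < dim_row X" "j < dim_row X" "m < dim_col X" "m' < dim_col X"
  shows "X $$ (i,m) / X $$ (j,m) \<le> distortion X * (X $$ (i,m') / X $$ (j,m'))"
proof -
  have "X $$ (i,m) * X $$ (j,m') / (X $$ (i,m') * X $$ (j,m)) \<le> distortion X"
    using cross_ratio_le_distortion assms by blast
  then show ?thesis using assms by (simp add: pos_mat_def field_simps)
qed

lemma col_ratio_le_distortion:
  assumes "pos_mat Y" "m < dim_row Y" "m' < dim_row Y" "k < dim_col Y" "l < dim_col Y"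
  shows "Y $$ (m,k) / Y $$ (m,l) \<le> distortion Y * (Y $$ (m',k) / Y $$ (m',l))"
proof -
  have "Y $$ (m,k) * Y $$ (m',l) / (Y $$ (m,l) * Y $$ (m',k)) \<le> distortion Y"
    using cross_ratio_le_distortion assms by blast
  then show ?thesis using assms by (simp add: pos_mat_def field_simps)
qed

lemma index_mult_mat_sum:
  assumes "i < dim_row X" "k < dim_col Y" "dim_col X = dim_row Y"
  shows "(X * Y) $$ (i,k) = (\<Sum>m<dim_row Y. X $$ (i,m) * Y $$ (m,k))"
  using assms by (simp add: scalar_prod_def atLeast0LessThan)

lemma pos_mat_mult:
  assumes "pos_mat X" "pos_mat Y" "dim_col X = dim_row Y" "dim_row Y > 0"
  shows "pos_mat (X * Y)"
  unfolding pos_mat_def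
proof (intro allI impI)
  fix i k assume "i < dim_row (X * Y)" "k < dim_col (X * Y)"
  then show "(X * Y) $$ (i,k) > 0"
    using assms by (subst index_mult_mat_sum) (auto simp: pos_mat_def intro!: sum_pos)
qed

subsection \<open>A reverse Cauchy--Schwarz type inequality\<close>

lemma exists_affine_param:
  fixes U c :: real
  assumes "1 \<le> U" "U \<le> c"
  obtains a where "0 \<le> a" "a \<le> 1" "U = 1 + a * (c - 1)"
proof (cases "c = 1")
  case True
  then show ?thesis using assms that[of 0] by simp
next
  case False
  then show ?thesis using assms that[of "(U - 1) / (c - 1)"] by (simp add: field_simps)
qed

lemma sq_add_mult_min_le:
  fixes a b \<sigma> \<tau> :: real
  assumes "0 \<le> a" "a \<le> 1" "0 \<le> b" "b \<le> 1" "1 \<le> \<sigma>" "1 \<le> \<tau>"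
  shows "(\<sigma> + \<tau>)\<^sup>2 * min (a * (1 - b)) (b * (1 - a))
           \<le> (1 + a * (\<sigma>\<^sup>2 - 1)) * (1 + b * (\<tau>\<^sup>2 - 1))"
proof -
  have ordered: "(\<sigma> + \<tau>)\<^sup>2 * (a * (1 - b)) \<le> (1 + a * (\<sigma>\<^sup>2 - 1)) * (1 + b * (\<tau>\<^sup>2 - 1))"
    if "0 \<le> a" "a \<le> b" "b \<le> 1" "1 \<le> \<sigma>" "1 \<le> \<tau>" for a b \<sigma> \<tau> :: real
  proof -
    have "(\<sigma> + \<tau>)\<^sup>2 * (a * (1 - b)) \<le> (\<sigma> + \<tau>)\<^sup>2 * (a * (1 - a))"
      using that by (intro mult_left_mono) auto
    also have "\<dots> \<le> (1 + a * (\<sigma>\<^sup>2 - 1)) * (1 + a * (\<tau>\<^sup>2 - 1))"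
    proof -
      have "(1 + a * (\<sigma>\<^sup>2 - 1)) * (1 + a * (\<tau>\<^sup>2 - 1)) - (\<sigma> + \<tau>)\<^sup>2 * (a * (1 - a))
            = (1 - a * (1 + \<sigma> * \<tau>))\<^sup>2"
        by (simp add: power2_eq_square algebra_simps)
      then show ?thesis by (smt (verit) zero_le_power2)
    qed
    also have "\<dots> \<le> (1 + a * (\<sigma>\<^sup>2 - 1)) * (1 + b * (\<tau>\<^sup>2 - 1))"
    proof -
      have "0 \<le> \<sigma>\<^sup>2 - 1" "0 \<le> \<tau>\<^sup>2 - 1" using that by (simp_all add: one_le_power)
      then show ?thesis using that by (intro mult_left_mono add_left_mono mult_right_mono) auto
    qed
    finally show ?thesis .
  qed
  show ?thesis
  proof (cases "a \<le> b")
    case True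
    have "(\<sigma> + \<tau>)\<^sup>2 * min (a * (1 - b)) (b * (1 - a)) \<le> (\<sigma> + \<tau>)\<^sup>2 * (a * (1 - b))"
      by (intro mult_left_mono) auto
    then show ?thesis using ordered[of a b \<sigma> \<tau>] True assms by linarith
  next
    case False
    have "(\<sigma> + \<tau>)\<^sup>2 * min (a * (1 - b)) (b * (1 - a)) \<le> (\<tau> + \<sigma>)\<^sup>2 * (b * (1 - a))"
      by (simp add: add.commute mult_left_mono)
    then show ?thesis using ordered[of b a \<tau> \<sigma>] False assms by (simp add: mult.commute)
  qed
qed

lemma le_mult_of_linear_bounds:
  fixes \<sigma> \<tau> U V W :: real
  assumes "1 \<le> \<sigma>" "1 \<le> \<tau>" "1 \<le> U" "U \<le> \<sigma>\<^sup>2" "1 \<le> V" "V \<le> \<tau>\<^sup>2"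
    and "W \<le> \<tau>\<^sup>2 * U + V - \<tau>\<^sup>2" "W \<le> U + \<sigma>\<^sup>2 * V - \<sigma>\<^sup>2"
  shows "W \<le> ((\<sigma> * \<tau> + 1) / (\<sigma> + \<tau>))\<^sup>2 * (U * V)"
proof -
  obtain a where a: "0 \<le> a" "a \<le> 1" "U = 1 + a * (\<sigma>\<^sup>2 - 1)"
    using exists_affine_param assms(3,4) by blast
  obtain b where b: "0 \<le> b" "b \<le> 1" "V = 1 + b * (\<tau>\<^sup>2 - 1)"
    using exists_affine_param assms(5,6) by blast
  define st where "st = (\<sigma>\<^sup>2 - 1) * (\<tau>\<^sup>2 - 1)"
  have st: "st \<ge> 0" using assms by (simp add: st_def one_le_power)
  have "W - U * V \<le> st * (a * (1 - b))"
    using assms(7) by (simp add: a b st_def algebra_simps)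
  moreover have "W - U * V \<le> st * (b * (1 - a))"
    using assms(8) by (simp add: a b st_def algebra_simps)
  ultimately have "W - U * V \<le> st * min (a * (1 - b)) (b * (1 - a))"
    by (simp add: min_def)
  from mult_left_mono[OF this zero_le_power2[of "\<sigma> + \<tau>"]]
  have "(\<sigma> + \<tau>)\<^sup>2 * (W - U * V) \<le> st * ((\<sigma> + \<tau>)\<^sup>2 * min (a * (1 - b)) (b * (1 - a)))"
    by (simp add: mult_ac)
  also have "\<dots> \<le> st * (U * V)"
    using sq_add_mult_min_le[OF a(1,2) b(1,2) assms(1,2)] st by (simp add: a b mult_left_mono)
  finally have "(\<sigma> + \<tau>)\<^sup>2 * W \<le> ((\<sigma> + \<tau>)\<^sup>2 + st) * (U * V)"
    by (simp add: algebra_simps)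
  also have "(\<sigma> + \<tau>)\<^sup>2 + st = (\<sigma> * \<tau> + 1)\<^sup>2"
    by (simp add: st_def power2_eq_square algebra_simps)
  finally show ?thesis
    using assms(1,2) by (simp add: power_divide field_simps)
qed

lemma exists_spread_normalizer:
  fixes u :: "'a \<Rightarrow> real"
  assumes "finite I" "I \<noteq> {}" "\<And>m. m \<in> I \<Longrightarrow> u m > 0"
    and "\<And>m m'. m \<in> I \<Longrightarrow> m' \<in> I \<Longrightarrow> u m \<le> c * u m'"
  obtains p where "p > 0" "\<And>m. m \<in> I \<Longrightarrow> p \<le> u m \<and> u m \<le> c * p"
proof -
  have "Min (u ` I) \<in> u ` I" using assms by (intro Min_in) auto
  then obtain m0 where m0: "m0 \<in> I" "Min (u ` I) = u m0" by auto
  show ?thesis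
  proof (rule that[of "u m0"])
    show "u m0 > 0" using assms(3) m0 by simp
    show "u m0 \<le> u m \<and> u m \<le> c * u m0" if "m \<in> I" for m
      using assms(1,4) m0 that by (metis Min_le finite_imageI image_eqI)
  qed
qed

lemma sum_weighted_product_le_normalized:
  fixes w u v :: "'a \<Rightarrow> real"
  assumes "finite I" "I \<noteq> {}" "\<And>m. m \<in> I \<Longrightarrow> w m > 0"
    and u: "\<And>m. m \<in> I \<Longrightarrow> 1 \<le> u m \<and> u m \<le> \<sigma>\<^sup>2"
    and v: "\<And>m. m \<in> I \<Longrightarrow> 1 \<le> v m \<and> v m \<le> \<tau>\<^sup>2"
    and "1 \<le> \<sigma>" "1 \<le> \<tau>"
  shows "(\<Sum>m\<in>I. w m) * (\<Sum>m\<in>I. w m * u m * v m)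
           \<le> ((\<sigma> * \<tau> + 1) / (\<sigma> + \<tau>))\<^sup>2 * ((\<Sum>m\<in>I. w m * u m) * (\<Sum>m\<in>I. w m * v m))"
proof -
  define S where "S = (\<Sum>m\<in>I. w m)"
  define Su where "Su = (\<Sum>m\<in>I. w m * u m)"
  define Sv where "Sv = (\<Sum>m\<in>I. w m * v m)"
  define Suv where "Suv = (\<Sum>m\<in>I. w m * u m * v m)"
  have S: "S > 0" unfolding S_def using assms by (intro sum_pos) auto
  have "w m * u m * v m \<le> \<tau>\<^sup>2 * (w m * u m) + w m * v m - \<tau>\<^sup>2 * w m" if "m \<in> I" for m
  proof -
    have "w m * ((u m - 1) * (v m - \<tau>\<^sup>2)) \<le> 0"
      using assms(3)[OF that] u[OF that] v[OF that]
      by (intro mult_nonneg_nonpos mult_nonneg_nonpos) auto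
    then show ?thesis by (simp add: algebra_simps)
  qed
  then have "Suv \<le> (\<Sum>m\<in>I. \<tau>\<^sup>2 * (w m * u m) + w m * v m - \<tau>\<^sup>2 * w m)"
    unfolding Suv_def by (rule sum_mono)
  also have "\<dots> = \<tau>\<^sup>2 * Su + Sv - \<tau>\<^sup>2 * S"
    by (simp add: Su_def Sv_def S_def sum.distrib sum_subtractf sum_distrib_left)
  finally have W1: "Suv \<le> \<tau>\<^sup>2 * Su + Sv - \<tau>\<^sup>2 * S" .
  have "w m * u m * v m \<le> w m * u m + \<sigma>\<^sup>2 * (w m * v m) - \<sigma>\<^sup>2 * w m" if "m \<in> I" for m
  proof -
    have "w m * ((u m - \<sigma>\<^sup>2) * (v m - 1)) \<le> 0"
      using assms(3)[OF that] u[OF that] v[OF that]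
      by (intro mult_nonneg_nonpos mult_nonpos_nonneg) auto
    then show ?thesis by (simp add: algebra_simps)
  qed
  then have "Suv \<le> (\<Sum>m\<in>I. w m * u m + \<sigma>\<^sup>2 * (w m * v m) - \<sigma>\<^sup>2 * w m)"
    unfolding Suv_def by (rule sum_mono)
  also have "\<dots> = Su + \<sigma>\<^sup>2 * Sv - \<sigma>\<^sup>2 * S"
    by (simp add: Su_def Sv_def S_def sum.distrib sum_subtractf sum_distrib_left)
  finally have W2: "Suv \<le> Su + \<sigma>\<^sup>2 * Sv - \<sigma>\<^sup>2 * S" .
  have U: "S \<le> Su" "Su \<le> \<sigma>\<^sup>2 * S"
    unfolding S_def Su_def sum_distrib_left using assms(3) u
    by (auto intro!: sum_mono simp: mult.commute[of "\<sigma>\<^sup>2"])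
  have V: "S \<le> Sv" "Sv \<le> \<tau>\<^sup>2 * S"
    unfolding S_def Sv_def sum_distrib_left using assms(3) v
    by (auto intro!: sum_mono simp: mult.commute[of "\<tau>\<^sup>2"])
  define K where "K = ((\<sigma> * \<tau> + 1) / (\<sigma> + \<tau>))\<^sup>2"
  have "Suv / S \<le> K * (Su / S * (Sv / S))"
    unfolding K_def using U V W1 W2 S assms(6,7)
    by (intro le_mult_of_linear_bounds) (simp_all add: field_simps)
  then have "S * Suv \<le> K * (Su * Sv)"
    using S by (simp add: field_simps power2_eq_square)
  then show ?thesis by (simp add: K_def S_def Su_def Sv_def Suv_def)
qed

lemma sum_weighted_product_le:
  fixes w u v :: "'a \<Rightarrow> real"
  assumes "finite I" "I \<noteq> {}" and pos: "\<And>m. m \<in> I \<Longrightarrow> w m > 0 \<and> u m > 0 \<and> v m > 0"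
    and "\<And>m m'. m \<in> I \<Longrightarrow> m' \<in> I \<Longrightarrow> u m \<le> \<sigma>\<^sup>2 * u m'"
    and "\<And>m m'. m \<in> I \<Longrightarrow> m' \<in> I \<Longrightarrow> v m \<le> \<tau>\<^sup>2 * v m'"
    and "1 \<le> \<sigma>" "1 \<le> \<tau>"
  shows "(\<Sum>m\<in>I. w m) * (\<Sum>m\<in>I. w m * u m * v m)
           \<le> ((\<sigma> * \<tau> + 1) / (\<sigma> + \<tau>))\<^sup>2 * ((\<Sum>m\<in>I. w m * u m) * (\<Sum>m\<in>I. w m * v m))"
proof -
  obtain p where p: "p > 0" "\<And>m. m \<in> I \<Longrightarrow> p \<le> u m \<and> u m \<le> \<sigma>\<^sup>2 * p"
    using exists_spread_normalizer[of I u] assms pos by blast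
  obtain q where q: "q > 0" "\<And>m. m \<in> I \<Longrightarrow> q \<le> v m \<and> v m \<le> \<tau>\<^sup>2 * q"
    using exists_spread_normalizer[of I v] assms pos by blast
  have "(\<Sum>m\<in>I. w m) * (\<Sum>m\<in>I. w m * (u m / p) * (v m / q))
          \<le> ((\<sigma> * \<tau> + 1) / (\<sigma> + \<tau>))\<^sup>2 * ((\<Sum>m\<in>I. w m * (u m / p)) * (\<Sum>m\<in>I. w m * (v m / q)))"
    using assms pos p q by (intro sum_weighted_product_le_normalized) (auto simp: field_simps)
  then show ?thesis
    using p(1) q(1) by (simp add: sum_divide_distrib[symmetric] field_simps)
qed

subsection \<open>Contraction of the distortion under multiplication\<close>

lemma distortion_mult_le:
  fixes X Y :: "real mat" and \<sigma> \<tau> :: real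
  assumes dims: "dim_row X > 0" "dim_col Y > 0" "dim_col X = dim_row Y" "dim_row Y > 0"
    and pos: "pos_mat X" "pos_mat Y"
    and dist: "distortion X \<le> \<sigma>\<^sup>2" "distortion Y \<le> \<tau>\<^sup>2"
    and "1 \<le> \<sigma>" "1 \<le> \<tau>"
  shows "distortion (X * Y) \<le> ((\<sigma> * \<tau> + 1) / (\<sigma> + \<tau>))\<^sup>2"
proof (rule distortion_leI)
  show "dim_row (X * Y) > 0" "dim_col (X * Y) > 0" using dims by auto
  fix i j k l
  assume "i < dim_row (X * Y)" "j < dim_row (X * Y)" "k < dim_col (X * Y)" "l < dim_col (X * Y)"
  then have ij: "i < dim_row X" "j < dim_row X" and kl: "k < dim_col Y" "l < dim_col Y" by auto
  define I where "I = {..<dim_row Y}"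
  define w where "w m = X $$ (j,m) * Y $$ (m,l)" for m
  define u where "u m = X $$ (i,m) / X $$ (j,m)" for m
  define v where "v m = Y $$ (m,k) / Y $$ (m,l)" for m
  have pX: "X $$ (a,m) > 0" if "a < dim_row X" "m \<in> I" for a m
    using pos(1) that dims(3) by (simp add: pos_mat_def I_def)
  have pY: "Y $$ (m,b) > 0" if "b < dim_col Y" "m \<in> I" for b m
    using pos(2) that by (simp add: pos_mat_def I_def)
  have entry: "(X * Y) $$ (a,b) = (\<Sum>m\<in>I. X $$ (a,m) * Y $$ (m,b))"
    if "a < dim_row X" "b < dim_col Y" for a b
    using index_mult_mat_sum[OF that dims(3)] by (simp add: I_def)
  have pos_wuv: "w m > 0 \<and> u m > 0 \<and> v m > 0" if "m \<in> I" for m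
    using pX[OF ij(1) that] pX[OF ij(2) that] pY[OF kl(1) that] pY[OF kl(2) that]
    by (simp add: w_def u_def v_def)
  have u_spread: "u m \<le> \<sigma>\<^sup>2 * u m'" if "m \<in> I" "m' \<in> I" for m m'
  proof -
    have "u m \<le> distortion X * u m'"
      using row_ratio_le_distortion[OF pos(1) ij] that dims(3) by (simp add: u_def I_def)
    also have "\<dots> \<le> \<sigma>\<^sup>2 * u m'"
      using dist(1) pos_wuv[OF that(2)] by (simp add: mult_right_mono)
    finally show ?thesis .
  qed
  have v_spread: "v m \<le> \<tau>\<^sup>2 * v m'" if "m \<in> I" "m' \<in> I" for m m'
  proof -
    have "v m \<le> distortion Y * v m'"
      using col_ratio_le_distortion[OF pos(2) _ _ kl] that by (simp add: v_def I_def)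
    also have "\<dots> \<le> \<tau>\<^sup>2 * v m'"
      using dist(2) pos_wuv[OF that(2)] by (simp add: mult_right_mono)
    finally show ?thesis .
  qed
  have nz: "X $$ (j,m) \<noteq> 0" "Y $$ (m,l) \<noteq> 0" if "m \<in> I" for m
    using pX[OF ij(2) that] pY[OF kl(2) that] by auto
  have "finite I" "I \<noteq> {}" using dims(4) by (auto simp: I_def)
  from sum_weighted_product_le[OF this pos_wuv u_spread v_spread \<open>1 \<le> \<sigma>\<close> \<open>1 \<le> \<tau>\<close>]
  have "(\<Sum>m\<in>I. w m) * (\<Sum>m\<in>I. w m * u m * v m)
          \<le> ((\<sigma> * \<tau> + 1) / (\<sigma> + \<tau>))\<^sup>2 * ((\<Sum>m\<in>I. w m * u m) * (\<Sum>m\<in>I. w m * v m))" .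
  moreover have "(X * Y) $$ (i,k) = (\<Sum>m\<in>I. w m * u m * v m)"
    using entry[OF ij(1) kl(1)] by (auto simp: w_def u_def v_def nz intro!: sum.cong)
  moreover have "(X * Y) $$ (j,l) = (\<Sum>m\<in>I. w m)"
    using entry[OF ij(2) kl(2)] by (simp add: w_def)
  moreover have "(X * Y) $$ (i,l) = (\<Sum>m\<in>I. w m * u m)"
    using entry[OF ij(1) kl(2)] by (auto simp: w_def u_def nz intro!: sum.cong)
  moreover have "(X * Y) $$ (j,k) = (\<Sum>m\<in>I. w m * v m)"
    using entry[OF ij(2) kl(1)] by (auto simp: w_def v_def nz intro!: sum.cong)
  moreover have "(\<Sum>m\<in>I. w m * u m) > 0" "(\<Sum>m\<in>I. w m * v m) > 0"
    using \<open>finite I\<close> \<open>I \<noteq> {}\<close> pos_wuv by (auto intro!: sum_pos)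
  ultimately show "(X * Y) $$ (i,k) * (X * Y) $$ (j,l) / ((X * Y) $$ (i,l) * (X * Y) $$ (j,k))
        \<le> ((\<sigma> * \<tau> + 1) / (\<sigma> + \<tau>))\<^sup>2"
    by (simp add: pos_divide_le_eq mult.commute)
qed

definition cayley :: "real \<Rightarrow> real" where
  "cayley c = (1 + c) / (1 - c)"

lemma one_le_cayley: "0 \<le> c \<Longrightarrow> c < 1 \<Longrightarrow> 1 \<le> cayley c"
  by (simp add: cayley_def)

lemma cayley_mult:
  assumes "x \<noteq> 1" "y \<noteq> 1"
  shows "(cayley x * cayley y + 1) / (cayley x + cayley y) = cayley (x * y)"
proof -
  define D where "D = (1 - x) * (1 - y) / 2"
  have "D \<noteq> 0" using assms by (simp add: D_def)
  have "cayley x * cayley y + 1 = (1 + x * y) / D"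
    using assms by (simp add: cayley_def D_def divide_simps) (simp add: algebra_simps)
  moreover have "cayley x + cayley y = (1 - x * y) / D"
    using assms by (simp add: cayley_def D_def divide_simps) (simp add: algebra_simps)
  ultimately show ?thesis using \<open>D \<noteq> 0\<close> by (simp add: cayley_def)
qed

lemma cayley_sq: "c \<noteq> 1 \<Longrightarrow> (cayley c)\<^sup>2 = 1 + 4 * c / (1 - c)\<^sup>2"
  by (simp add: cayley_def power_divide field_simps) (simp add: power2_eq_square algebra_simps)

lemma cayley_inverse: "0 \<le> a \<Longrightarrow> cayley ((a - 1) / (a + 1)) = a"
  by (simp add: cayley_def field_simps)

lemma tendsto_cayley_power_sq:
  assumes "0 \<le> \<kappa>" "\<kappa> < 1"
  shows "(\<lambda>n. (cayley (\<kappa> ^ n))\<^sup>2) \<longlonglongrightarrow> 1"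
proof -
  have "(\<lambda>n. ((1 + \<kappa> ^ n) / (1 - \<kappa> ^ n))\<^sup>2) \<longlonglongrightarrow> ((1 + 0) / (1 - 0))\<^sup>2"
    using assms by (intro tendsto_intros LIMSEQ_power_zero) auto
  then show ?thesis by (simp add: cayley_def)
qed

lemma distortion_mult_le_cayley:
  assumes "dim_row X > 0" "dim_col Y > 0" "dim_col X = dim_row Y" "dim_row Y > 0"
    and "pos_mat X" "pos_mat Y"
    and "distortion X \<le> (cayley x)\<^sup>2" "distortion Y \<le> (cayley y)\<^sup>2"
    and "0 \<le> x" "x < 1" "0 \<le> y" "y < 1"
  shows "distortion (X * Y) \<le> (cayley (x * y))\<^sup>2"
  using distortion_mult_le[OF assms(1-8)] one_le_cayley cayley_mult assms(9-12) by simp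

lemma prod_seq_shape:
  assumes "\<And>n. n \<ge> 1 \<Longrightarrow> dim_row (A n) > 0"
    and "\<And>n. n \<ge> 1 \<Longrightarrow> pos_mat (A n)"
    and "\<And>n. n \<ge> 1 \<Longrightarrow> dim_col (A (Suc n)) = dim_row (A n)"
    and "n \<ge> 1"
  shows "dim_row (prod_seq A n) = dim_row (A n) \<and> dim_col (prod_seq A n) = dim_col (A 1)
           \<and> pos_mat (prod_seq A n)"
  using \<open>n \<ge> 1\<close>
proof (induction n rule: nat_induct_at_least)
  case base
  then show ?case using assms(2) by simp
next
  case (Suc n)
  then show ?case using assms pos_mat_mult[of "A (Suc n)" "prod_seq A n"] by simp
qed

lemma distortion_prod_seq_le:
  assumes nonempty: "\<And>n. n \<ge> 1 \<Longrightarrow> dim_row (A n) > 0 \<and> dim_col (A n) > 0"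
    and pos: "\<And>n. n \<ge> 1 \<Longrightarrow> pos_mat (A n)"
    and compat: "\<And>n. n \<ge> 1 \<Longrightarrow> dim_col (A (Suc n)) = dim_row (A n)"
    and bound: "\<And>n. n \<ge> 1 \<Longrightarrow> distortion (A n) \<le> (cayley \<kappa>)\<^sup>2"
    and "0 \<le> \<kappa>" "\<kappa> < 1" "n \<ge> 1"
  shows "distortion (prod_seq A n) \<le> (cayley (\<kappa> ^ n))\<^sup>2"
  using \<open>n \<ge> 1\<close>
proof (induction n rule: nat_induct_at_least)
  case base
  then show ?case using bound[of 1] by simp
next
  case (Suc n)
  have shape: "dim_row (prod_seq A n) = dim_row (A n)" "dim_col (prod_seq A n) = dim_col (A 1)"
    "pos_mat (prod_seq A n)"
    using prod_seq_shape[of A n] nonempty pos compat Suc.hyps by auto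
  have "distortion (A (Suc n) * prod_seq A n) \<le> (cayley (\<kappa> * \<kappa> ^ n))\<^sup>2"
    using Suc nonempty[of "Suc n"] nonempty[of n] nonempty[of 1] compat[of n] pos[of "Suc n"]
      bound[of "Suc n"] shape \<open>0 \<le> \<kappa>\<close> \<open>\<kappa> < 1\<close>
    by (intro distortion_mult_le_cayley) (auto simp: power_le_one power_less_one_iff)
  then show ?case by simp
qed

theorem mainTheorem11:
  fixes A :: "nat \<Rightarrow> real mat" and \<alpha> \<kappa> :: real
  assumes nonempty: "\<And>n. n \<ge> 1 \<Longrightarrow> dim_row (A n) > 0 \<and> dim_col (A n) > 0"
    and pos: "\<And>n. n \<ge> 1 \<Longrightarrow> pos_mat (A n)"
    and compat: "\<And>n. n \<ge> 1 \<Longrightarrow> dim_col (A (Suc n)) = dim_row (A n)"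
    and alpha: "\<alpha> \<ge> 1"
    and bound: "\<And>n. n \<ge> 1 \<Longrightarrow> distortion (A n) \<le> \<alpha>"
    and kappa: "\<kappa> = (sqrt \<alpha> - 1) / (sqrt \<alpha> + 1)"
  shows "(\<forall>n\<ge>1. distortion (prod_seq A n) \<le> 1 + 4 * \<kappa> ^ n / (1 - \<kappa> ^ n)\<^sup>2)
         \<and> (\<lambda>n. distortion (prod_seq A n)) \<longlonglongrightarrow> 1"
proof -
  obtain s where s: "sqrt \<alpha> = s" "1 \<le> s" using alpha by simp
  then have \<kappa>: "0 \<le> \<kappa>" "\<kappa> < 1" by (auto simp: kappa field_simps)
  have cayley_\<kappa>: "(cayley \<kappa>)\<^sup>2 = \<alpha>" using alpha by (simp add: kappa cayley_inverse)
  have upper: "distortion (prod_seq A n) \<le> (cayley (\<kappa> ^ n))\<^sup>2" if "n \<ge> 1" for n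
    by (rule distortion_prod_seq_le) (use that in \<open>simp_all add: nonempty pos compat bound cayley_\<kappa> \<kappa>\<close>)
  have lower: "1 \<le> distortion (prod_seq A n)" if "n \<ge> 1" for n
    using prod_seq_shape[of A n] nonempty pos compat that nonempty[of n] nonempty[of 1]
    by (intro one_le_distortion) auto
  have "(\<lambda>n. distortion (prod_seq A n)) \<longlonglongrightarrow> 1"
  proof (rule tendsto_sandwich[OF _ _ tendsto_const tendsto_cayley_power_sq[OF \<kappa>]])
    show "\<forall>\<^sub>F n in sequentially. 1 \<le> distortion (prod_seq A n)"
      "\<forall>\<^sub>F n in sequentially. distortion (prod_seq A n) \<le> (cayley (\<kappa> ^ n))\<^sup>2"
      using lower upper by (auto simp: eventually_sequentially)
  qed
  moreover have "\<kappa> ^ n \<noteq> 1" if "n \<ge> 1" for n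
    using \<kappa> that power_less_one_iff[of \<kappa> n] by auto
  ultimately show ?thesis using upper cayley_sq by simp
qed

end
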